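(* Let $X$ be a normed space and $Y$ a Banach space, and let $l\in\{-1,1\}$. Suppose that an odd mapping $f:X\to Y$ satisfies $\|D_f(x,y)\|\le\phi(x,y)$ for all $x,y\in X$, where $\phi:X\times X\to[0,\infty)$ is a function such that $$\sum_{i=1}^{\infty}2^{il}\phi\left(\frac{x}{2^{il}},\frac{x}{2^{il}}\right)<\infty$$ for all $x\in X$ and $\lim_{n\to\infty}2^{ln}\phi\left(\frac{x}{2^{ln}},\frac{y}{2^{ln}}\right)=0$ for all $x,y\in X$. Then the limit $$A(x)=\lim_{n\to\infty}2^{ln}\left[f\left(\frac{x}{2^{l(n-l)}}\right)-8f\left(\frac{x}{2^{ln}}\right)\right]$$ exists for all $x\in X$, and $A:X\to Y$ is the unique additive function which satisfies $$3A(x+3y)-A(3x+y)=12[A(x+y)+A(x-y)]-16[A(x)+A(y)]+12A(2y)-4A(2x)\quad(x,y\in X)$$ and $$\|f(2x)-8f(x)-A(x)\|\le\frac12\sum_{i=\frac{|l-1|}{2}}^{\infty}2^{il}\phi\left(\frac{x}{2^{l(i+l)}},\frac{x}{2^{l(i+l)}}\right)$$ for all $x\in X$ (the summation starts at $i=0$ if $l=1$ and at $i=1$ if $l=-1$).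
   Context: For a mapping $f:X\to Y$ define $$D_f(x,y)=3f(x+3y)-f(3x+y)-12[f(x+y)+f(x-y)]+16[f(x)+f(y)]-12f(2y)+4f(2x)$$ for $x,y\in X$. A function $g:X\to Y$ is additive if $g(x+y)=g(x)+g(y)$ for all $x,y\in X$. *)

theory Defs
  imports "HOL-Analysis.Analysis"
begin

definition Dop :: "('a::real_vector \<Rightarrow> 'b::real_vector) \<Rightarrow> 'a \<Rightarrow> 'a \<Rightarrow> 'b" where
  "Dop f x y =
     3 *\<^sub>R f (x + 3 *\<^sub>R y) - f (3 *\<^sub>R x + y)
     - 12 *\<^sub>R (f (x + y) + f (x - y)) + 16 *\<^sub>R (f x + f y)
     - 12 *\<^sub>R f (2 *\<^sub>R y) + 4 *\<^sub>R f (2 *\<^sub>R x)"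

end

theory Submission
  imports Defs
begin

text \<open>Put \<open>g x = f (2x) - 8 f x\<close>. For odd \<open>f\<close> the diagonal value is
  \<open>D\<^sub>f(x,x) = 2 (g (2x) - 2 g x)\<close>, so \<open>g\<close> satisfies a Hyers-type estimate and the direct
  method gives \<open>A x = lim 2\<^sup>l\<^sup>n g (x / 2\<^sup>l\<^sup>n)\<close>, which is odd, satisfies \<open>A (2x) = 2 A x\<close>,
  and stays within the stated distance of \<open>g\<close>. Since \<open>D\<^sub>g\<close> is controlled by \<open>\<phi>\<close>,
  which vanishes under this rescaling, \<open>D\<^sub>A = 0\<close>. Combining \<open>D\<^sub>A(x,y)\<close> and
  \<open>D\<^sub>A(y,x)\<close> gives \<open>A (2u - v) = 6 A u + 3 A v - 4 A (u + v)\<close>, from which \<open>A (3x) = 3 A x\<close>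
  and then additivity follow. Any additive \<open>B\<close> within the same distance of \<open>g\<close> is the
  limit of the same sequence, because the tails of the error series tend to zero.\<close>

lemma suminf_shift_tendsto_zero:
  fixes a :: "nat \<Rightarrow> 'a::real_normed_vector"
  assumes "summable a"
  shows "(\<lambda>k. \<Sum>i. a (i + k)) \<longlonglongrightarrow> 0"
proof -
  have "(\<lambda>k. \<Sum>i. a (i + k)) = (\<lambda>k. suminf a - (\<Sum>i<k. a i))"
    using suminf_split_initial_segment[OF assms] by (auto simp: algebra_simps)
  moreover have "(\<lambda>k. suminf a - (\<Sum>i<k. a i)) \<longlonglongrightarrow> suminf a - suminf a"
    by (intro tendsto_intros summable_LIMSEQ assms)
  ultimately show ?thesis by simp
qed

lemma hyers_limit_exists:
  fixes h :: "'a::real_normed_vector \<Rightarrow> 'b::banach"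
  assumes r: "r > 0"
    and err: "\<And>x. norm (h x - r *\<^sub>R h (x /\<^sub>R r)) \<le> \<psi> x"
    and summ: "\<And>x. summable (\<lambda>i. r^i * \<psi> (x /\<^sub>R r^i))"
  obtains A where "\<And>x. (\<lambda>n. r^n *\<^sub>R h (x /\<^sub>R r^n)) \<longlonglongrightarrow> A x"
    and "\<And>x. norm (h x - A x) \<le> (\<Sum>i. r^i * \<psi> (x /\<^sub>R r^i))"
proof -
  define d where "d x i = r^i *\<^sub>R h (x /\<^sub>R r^i) - r^Suc i *\<^sub>R h (x /\<^sub>R r^Suc i)" for x i
  have norm_d: "norm (d x i) \<le> r^i * \<psi> (x /\<^sub>R r^i)" for x i
  proof -
    have "d x i = r^i *\<^sub>R (h (x /\<^sub>R r^i) - r *\<^sub>R h ((x /\<^sub>R r^i) /\<^sub>R r))"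
      using r by (simp add: d_def algebra_simps)
    then show ?thesis
      using r err[of "x /\<^sub>R r^i"] by (simp add: mult_left_mono)
  qed
  have summ_norm_d: "summable (\<lambda>i. norm (d x i))" for x
    by (rule summable_comparison_test'[OF summ]) (use norm_d in simp)
  have telescope: "r^n *\<^sub>R h (x /\<^sub>R r^n) = h x - (\<Sum>i<n. d x i)" for x n
    unfolding d_def by (subst sum_lessThan_telescope'[where f="\<lambda>i. r^i *\<^sub>R h (x /\<^sub>R r^i)"]) simp
  show ?thesis
  proof
    show "(\<lambda>n. r^n *\<^sub>R h (x /\<^sub>R r^n)) \<longlonglongrightarrow> h x - suminf (d x)" for x
      unfolding telescope
      by (intro tendsto_intros summable_LIMSEQ summable_norm_cancel[OF summ_norm_d])
    have "norm (suminf (d x)) \<le> (\<Sum>i. r^i * \<psi> (x /\<^sub>R r^i))" for x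
      using summable_norm[OF summ_norm_d[of x]] suminf_le[OF norm_d summ_norm_d[of x] summ[of x]]
      by linarith
    then show "norm (h x - (h x - suminf (d x))) \<le> (\<Sum>i. r^i * \<psi> (x /\<^sub>R r^i))" for x
      by simp
  qed
qed

lemma hyers_limit_unique:
  fixes h B :: "'a::real_normed_vector \<Rightarrow> 'b::real_normed_vector"
  assumes r: "r > 0"
    and scale: "\<And>x. B x = r *\<^sub>R B (x /\<^sub>R r)"
    and dist: "\<And>x. norm (h x - B x) \<le> (\<Sum>i. r^i * \<psi> (x /\<^sub>R r^i))"
    and summ: "\<And>x. summable (\<lambda>i. r^i * \<psi> (x /\<^sub>R r^i))"
  shows "(\<lambda>n. r^n *\<^sub>R h (x /\<^sub>R r^n)) \<longlonglongrightarrow> B x"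
proof -
  have scale_pow: "B x = r^n *\<^sub>R B (x /\<^sub>R r^n)" for n
  proof (induction n)
    case (Suc n)
    then show ?case
      using r scale[of "x /\<^sub>R r^n"] by (simp add: mult.commute)
  qed simp
  have "norm (r^n *\<^sub>R h (x /\<^sub>R r^n) - B x) \<le> (\<Sum>i. r^(i + n) * \<psi> (x /\<^sub>R r^(i + n)))" for n
  proof -
    let ?y = "x /\<^sub>R r^n"
    have "norm (r^n *\<^sub>R h ?y - B x) = r^n * norm (h ?y - B ?y)"
      using r by (subst scale_pow[of n]) (simp flip: scaleR_diff_right)
    also have "\<dots> \<le> r^n * (\<Sum>i. r^i * \<psi> (?y /\<^sub>R r^i))"
      using r by (intro mult_left_mono dist) simp
    also have "\<dots> = (\<Sum>i. r^(i + n) * \<psi> (x /\<^sub>R r^(i + n)))"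
      using r suminf_mult[OF summ[of ?y], of "r^n"] by (simp add: power_add mult_ac)
    finally show ?thesis .
  qed
  then have "(\<lambda>n. r^n *\<^sub>R h (x /\<^sub>R r^n) - B x) \<longlonglongrightarrow> 0"
    by (intro Lim_null_comparison[OF always_eventually suminf_shift_tendsto_zero[OF summ[of x]]]) simp
  then show ?thesis by (rule LIM_zero_cancel)
qed

lemma hyers_limit_scale:
  fixes h :: "'a::real_normed_vector \<Rightarrow> 'b::real_normed_vector"
  assumes r: "r > 0"
    and lim: "\<And>x. (\<lambda>n. r^n *\<^sub>R h (x /\<^sub>R r^n)) \<longlonglongrightarrow> A x"
  shows "A x = r *\<^sub>R A (x /\<^sub>R r)"
proof -
  have "(\<lambda>n. r *\<^sub>R (r^n *\<^sub>R h ((x /\<^sub>R r) /\<^sub>R r^n))) \<longlonglongrightarrow> r *\<^sub>R A (x /\<^sub>R r)"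
    by (intro tendsto_intros lim)
  moreover have "(\<lambda>n. r *\<^sub>R (r^n *\<^sub>R h ((x /\<^sub>R r) /\<^sub>R r^n))) = (\<lambda>n. r^Suc n *\<^sub>R h (x /\<^sub>R r^Suc n))"
    using r by (simp add: mult_ac)
  ultimately have "(\<lambda>n. r^Suc n *\<^sub>R h (x /\<^sub>R r^Suc n)) \<longlonglongrightarrow> r *\<^sub>R A (x /\<^sub>R r)"
    by simp
  with LIMSEQ_Suc[OF lim[of x]] show ?thesis by (rule LIMSEQ_unique)
qed

lemma zero_if_odd:
  fixes f :: "'a::real_vector \<Rightarrow> 'b::real_vector"
  assumes "\<And>x. f (- x) = - f x"
  shows "f 0 = 0"
  using assms[of 0] by (auto simp: eq_neg_iff_add_eq_0 simp flip: scaleR_2)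

lemma Dop_eq_zero_iff:
  "Dop A x y = 0 \<longleftrightarrow>
     3 *\<^sub>R A (x + 3 *\<^sub>R y) - A (3 *\<^sub>R x + y) =
       12 *\<^sub>R (A (x + y) + A (x - y)) - 16 *\<^sub>R (A x + A y) + 12 *\<^sub>R A (2 *\<^sub>R y) - 4 *\<^sub>R A (2 *\<^sub>R x)"
  unfolding Dop_def by (simp add: algebra_simps)

lemma Dop_scaled:
  assumes "t \<noteq> 0"
  shows "Dop (\<lambda>z. c *\<^sub>R h (z /\<^sub>R t)) x y = c *\<^sub>R Dop h (x /\<^sub>R t) (y /\<^sub>R t)"
  unfolding Dop_def using assms by (simp add: algebra_simps)

lemma Dop_doubling_difference:
  "Dop (\<lambda>z. f (2 *\<^sub>R z) - 8 *\<^sub>R f z) x y = Dop f (2 *\<^sub>R x) (2 *\<^sub>R y) - 8 *\<^sub>R Dop f x y"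
  unfolding Dop_def by (simp add: algebra_simps)

lemma Dop_diag:
  fixes f :: "'a::real_normed_vector \<Rightarrow> 'b::real_normed_vector"
  assumes odd: "\<And>x. f (- x) = - f x"
  shows "Dop f x x = 2 *\<^sub>R ((f (4 *\<^sub>R x) - 8 *\<^sub>R f (2 *\<^sub>R x)) - 2 *\<^sub>R (f (2 *\<^sub>R x) - 8 *\<^sub>R f x))"
proof -
  have "x + 3 *\<^sub>R x = 4 *\<^sub>R x" "3 *\<^sub>R x + x = 4 *\<^sub>R x" "x + x = 2 *\<^sub>R x" by norm+
  with zero_if_odd[of f, OF odd] show ?thesis unfolding Dop_def by simp norm
qed

lemma Dop_limit_eq_zero:
  fixes h :: "'a::real_normed_vector \<Rightarrow> 'b::real_normed_vector"
  assumes r: "r > 0"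
    and lim: "\<And>x. (\<lambda>n. r^n *\<^sub>R h (x /\<^sub>R r^n)) \<longlonglongrightarrow> A x"
    and bound: "\<And>x y. norm (Dop h x y) \<le> \<Phi> x y"
    and lim0: "\<And>x y. (\<lambda>n. r^n * \<Phi> (x /\<^sub>R r^n) (y /\<^sub>R r^n)) \<longlonglongrightarrow> 0"
  shows "Dop A x y = 0"
proof -
  let ?D = "\<lambda>n. Dop (\<lambda>z. r^n *\<^sub>R h (z /\<^sub>R r^n)) x y"
  have "?D \<longlonglongrightarrow> Dop A x y"
    unfolding Dop_def by (intro tendsto_intros lim)
  moreover have "norm (?D n) \<le> r^n * \<Phi> (x /\<^sub>R r^n) (y /\<^sub>R r^n)" for n
    using r bound by (simp add: Dop_scaled mult_left_mono)
  then have "?D \<longlonglongrightarrow> 0"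
    by (intro Lim_null_comparison[OF always_eventually lim0[of x y]]) simp
  ultimately show ?thesis by (rule LIMSEQ_unique)
qed

lemma additive_if_Dop_eq_zero:
  fixes A :: "'a::real_normed_vector \<Rightarrow> 'b::real_normed_vector"
  assumes odd: "\<And>x. A (- x) = - A x"
    and double: "\<And>x. A (2 *\<^sub>R x) = 2 *\<^sub>R A x"
    and Dop: "\<And>x y. Dop A x y = 0"
  shows "Modules.additive A"
proof -
  have half: "A ((1/2) *\<^sub>R x) = (1/2) *\<^sub>R A x" for x
    using double[of "(1/2) *\<^sub>R x"] by simp
  have shift: "A (2 *\<^sub>R u - v) = 6 *\<^sub>R A u + 3 *\<^sub>R A v - 4 *\<^sub>R A (u + v)" for u v
  proof -
    define x y where "x = (1/2) *\<^sub>R (u + v)" and "y = (1/2) *\<^sub>R (u - v)"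
    have args: "x + 3 *\<^sub>R y = 2 *\<^sub>R u - v" "3 *\<^sub>R x + y = 2 *\<^sub>R u + v" "x + y = u" "x - y = v"
      "y + 3 *\<^sub>R x = 2 *\<^sub>R u + v" "3 *\<^sub>R y + x = 2 *\<^sub>R u - v" "y + x = u" "y - x = - v"
      "2 *\<^sub>R x = u + v" "2 *\<^sub>R y = u - v"
      unfolding x_def y_def by norm+
    have "A x = (1/2) *\<^sub>R A (u + v)" "A y = (1/2) *\<^sub>R A (u - v)"
      unfolding x_def y_def by (rule half)+
    then have "8 *\<^sub>R (A (2 *\<^sub>R u - v) - (6 *\<^sub>R A u + 3 *\<^sub>R A v - 4 *\<^sub>R A (u + v)))
        = 3 *\<^sub>R Dop A x y + Dop A y x"
      unfolding Dop_def args odd by simp norm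
    then show ?thesis using Dop by simp
  qed
  have third: "A ((1/3) *\<^sub>R x) = (1/3) *\<^sub>R A x" for x
  proof -
    have "A (3 *\<^sub>R z) = 3 *\<^sub>R A z" for z
    proof -
      have "2 *\<^sub>R z - - z = 3 *\<^sub>R z" by norm
      then show ?thesis using shift[of z "- z"] by (simp add: odd zero_if_odd[of A, OF odd] flip: scaleR_left_diff_distrib)
    qed
    from this[of "(1/3) *\<^sub>R x"] show ?thesis by simp
  qed
  show ?thesis
  proof
    fix p q :: 'a
    have "2 *\<^sub>R ((1/3) *\<^sub>R (p + q)) - (1/3) *\<^sub>R (2 *\<^sub>R q - p) = p"
      and "(1/3) *\<^sub>R (p + q) + (1/3) *\<^sub>R (2 *\<^sub>R q - p) = q" by norm+
    then have "A p = 2 *\<^sub>R A (p + q) + A (2 *\<^sub>R q - p) - 4 *\<^sub>R A q"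
      using shift[of "(1/3) *\<^sub>R (p + q)" "(1/3) *\<^sub>R (2 *\<^sub>R q - p)"]
      unfolding third by simp
    moreover have "A (2 *\<^sub>R q - p) = 6 *\<^sub>R A q + 3 *\<^sub>R A p - 4 *\<^sub>R A (p + q)"
      using shift[of q p] by (simp add: add.commute)
    moreover have "2 *\<^sub>R (A (p + q) - (A p + A q)) =
        (A (2 *\<^sub>R q - p) - (6 *\<^sub>R A q + 3 *\<^sub>R A p - 4 *\<^sub>R A (p + q)))
        + (A p - (2 *\<^sub>R A (p + q) + A (2 *\<^sub>R q - p) - 4 *\<^sub>R A q))" by norm
    ultimately show "A (p + q) = A p + A q" by simp
  qed
qed

lemma scale_eq_iff_double_eq:
  fixes B :: "'a::real_vector \<Rightarrow> 'b::real_vector"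
  assumes "r = 2 \<or> r = 1/2"
  shows "(\<forall>x. B x = r *\<^sub>R B (x /\<^sub>R r)) \<longleftrightarrow> (\<forall>x. B (2 *\<^sub>R x) = 2 *\<^sub>R B x)"
proof
  assume scale: "\<forall>x. B x = r *\<^sub>R B (x /\<^sub>R r)"
  show "\<forall>x. B (2 *\<^sub>R x) = 2 *\<^sub>R B x"
  proof
    fix x
    from assms show "B (2 *\<^sub>R x) = 2 *\<^sub>R B x"
    proof
      assume "r = 2" then show ?thesis using scale[rule_format, of "2 *\<^sub>R x"] by simp
    next
      assume "r = 1/2" then show ?thesis using scale[rule_format, of x] by (simp only:) simp
    qed
  qed
next
  assume double: "\<forall>x. B (2 *\<^sub>R x) = 2 *\<^sub>R B x"
  show "\<forall>x. B x = r *\<^sub>R B (x /\<^sub>R r)"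
  proof
    fix x
    from assms show "B x = r *\<^sub>R B (x /\<^sub>R r)"
    proof
      assume "r = 2" then show ?thesis using double[rule_format, of "x /\<^sub>R 2"] by simp
    next
      assume "r = 1/2" then show ?thesis using double[rule_format, of x] by (simp only:) simp
    qed
  qed
qed

lemma Dop_stability:
  fixes f :: "'a::real_normed_vector \<Rightarrow> 'b::banach"
  assumes r: "r = 2 \<or> r = 1/2"
    and odd: "\<And>x. f (- x) = - f x"
    and bound: "\<And>x y. norm (Dop f x y) \<le> \<phi> x y"
    and lim0: "\<And>x y. (\<lambda>n. r^n * \<phi> (x /\<^sub>R r^n) (y /\<^sub>R r^n)) \<longlonglongrightarrow> 0"
    and err: "\<And>x. norm ((f (2 *\<^sub>R x) - 8 *\<^sub>R f x)
                        - r *\<^sub>R (f (2 *\<^sub>R (x /\<^sub>R r)) - 8 *\<^sub>R f (x /\<^sub>R r))) \<le> \<psi> x"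
    and summ: "\<And>x. summable (\<lambda>i. r^i * \<psi> (x /\<^sub>R r^i))"
  obtains A where "\<And>x. (\<lambda>n. r^n *\<^sub>R (f (2 *\<^sub>R (x /\<^sub>R r^n)) - 8 *\<^sub>R f (x /\<^sub>R r^n))) \<longlonglongrightarrow> A x"
    and "Modules.additive A"
    and "\<And>x y. Dop A x y = 0"
    and "\<And>x. norm (f (2 *\<^sub>R x) - 8 *\<^sub>R f x - A x) \<le> (\<Sum>i. r^i * \<psi> (x /\<^sub>R r^i))"
    and "\<And>B. Modules.additive B \<Longrightarrow>
           (\<And>x. norm (f (2 *\<^sub>R x) - 8 *\<^sub>R f x - B x) \<le> (\<Sum>i. r^i * \<psi> (x /\<^sub>R r^i))) \<Longrightarrow> B = A"
proof -
  define g where "g x = f (2 *\<^sub>R x) - 8 *\<^sub>R f x" for x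
  have r_pos: "r > 0" using r by auto
  have err_g: "norm (g x - r *\<^sub>R g (x /\<^sub>R r)) \<le> \<psi> x" for x
    using err unfolding g_def .
  obtain A where lim: "\<And>x. (\<lambda>n. r^n *\<^sub>R g (x /\<^sub>R r^n)) \<longlonglongrightarrow> A x"
    and dist: "\<And>x. norm (g x - A x) \<le> (\<Sum>i. r^i * \<psi> (x /\<^sub>R r^i))"
    using hyers_limit_exists[OF r_pos err_g summ] by blast
  have double: "A (2 *\<^sub>R x) = 2 *\<^sub>R A x" for x
    using hyers_limit_scale[OF r_pos lim] scale_eq_iff_double_eq[OF r] by blast
  have odd_A: "A (- x) = - A x" for x
  proof -
    have "(\<lambda>n. r^n *\<^sub>R g (- x /\<^sub>R r^n)) = (\<lambda>n. - (r^n *\<^sub>R g (x /\<^sub>R r^n)))"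
      by (simp add: g_def odd algebra_simps)
    with lim[of "- x"] have "(\<lambda>n. - (r^n *\<^sub>R g (x /\<^sub>R r^n))) \<longlonglongrightarrow> A (- x)" by simp
    with tendsto_minus[OF lim[of x]] show ?thesis by (rule LIMSEQ_unique[rotated])
  qed
  have Dop_A: "Dop A x y = 0" for x y
  proof (rule Dop_limit_eq_zero[OF r_pos lim])
    show "norm (Dop g x y) \<le> \<phi> (2 *\<^sub>R x) (2 *\<^sub>R y) + 8 * \<phi> x y" for x y
      unfolding g_def Dop_doubling_difference
      using norm_triangle_ineq4[of "Dop f (2 *\<^sub>R x) (2 *\<^sub>R y)" "8 *\<^sub>R Dop f x y"] bound[of x y]
        bound[of "2 *\<^sub>R x" "2 *\<^sub>R y"] by simp
    show "(\<lambda>n. r^n * (\<phi> (2 *\<^sub>R (x /\<^sub>R r^n)) (2 *\<^sub>R (y /\<^sub>R r^n)) + 8 * \<phi> (x /\<^sub>R r^n) (y /\<^sub>R r^n)))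
        \<longlonglongrightarrow> 0" for x y
      using tendsto_add[OF lim0[of "2 *\<^sub>R x" "2 *\<^sub>R y"] tendsto_mult_right_zero[OF lim0[of x y], of 8]]
      by (simp add: algebra_simps)
  qed
  show ?thesis
  proof
    show "(\<lambda>n. r^n *\<^sub>R (f (2 *\<^sub>R (x /\<^sub>R r^n)) - 8 *\<^sub>R f (x /\<^sub>R r^n))) \<longlonglongrightarrow> A x" for x
      using lim unfolding g_def .
    show "Modules.additive A"
      using odd_A double Dop_A by (rule additive_if_Dop_eq_zero)
    show "Dop A x y = 0" for x y by (rule Dop_A)
    show "norm (f (2 *\<^sub>R x) - 8 *\<^sub>R f x - A x) \<le> (\<Sum>i. r^i * \<psi> (x /\<^sub>R r^i))" for x
      using dist unfolding g_def .
  next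
    fix B
    assume "Modules.additive B"
      and dist_B: "\<And>x. norm (f (2 *\<^sub>R x) - 8 *\<^sub>R f x - B x) \<le> (\<Sum>i. r^i * \<psi> (x /\<^sub>R r^i))"
    then have "B (2 *\<^sub>R x) = 2 *\<^sub>R B x" for x
      by (simp add: Modules.additive.add scaleR_2)
    then have "B x = r *\<^sub>R B (x /\<^sub>R r)" for x
      using scale_eq_iff_double_eq[OF r] by blast
    then have "(\<lambda>n. r^n *\<^sub>R g (x /\<^sub>R r^n)) \<longlonglongrightarrow> B x" for x
      using dist_B summ unfolding g_def by (rule hyers_limit_unique[OF r_pos])
    with lim show "B = A" by (blast intro: LIMSEQ_unique)
  qed
qed

lemma Dop_stability_expanding:
  fixes f :: "'a::real_normed_vector \<Rightarrow> 'b::banach"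
  assumes odd: "\<And>x. f (- x) = - f x"
    and bound: "\<And>x y. norm (Dop f x y) \<le> \<phi> x y"
    and summ: "\<And>x. summable (\<lambda>i. 2^Suc i * \<phi> (x /\<^sub>R 2^Suc i) (x /\<^sub>R 2^Suc i))"
    and lim0: "\<And>x y. (\<lambda>n. 2^n * \<phi> (x /\<^sub>R 2^n) (y /\<^sub>R 2^n)) \<longlonglongrightarrow> 0"
  obtains A where "\<And>x. (\<lambda>n. 2^n *\<^sub>R (f (2 *\<^sub>R (x /\<^sub>R 2^n)) - 8 *\<^sub>R f (x /\<^sub>R 2^n))) \<longlonglongrightarrow> A x"
    and "Modules.additive A"
    and "\<And>x y. Dop A x y = 0"
    and "\<And>x. norm (f (2 *\<^sub>R x) - 8 *\<^sub>R f x - A x)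
               \<le> 1/2 * (\<Sum>i. 2^i * \<phi> (x /\<^sub>R 2^Suc i) (x /\<^sub>R 2^Suc i))"
    and "\<And>B. Modules.additive B \<Longrightarrow>
           (\<And>x. norm (f (2 *\<^sub>R x) - 8 *\<^sub>R f x - B x)
                   \<le> 1/2 * (\<Sum>i. 2^i * \<phi> (x /\<^sub>R 2^Suc i) (x /\<^sub>R 2^Suc i))) \<Longrightarrow> B = A"
proof -
  define \<psi> where "\<psi> x = 1/2 * \<phi> (x /\<^sub>R 2) (x /\<^sub>R 2)" for x
  have err: "norm ((f (2 *\<^sub>R x) - 8 *\<^sub>R f x) - 2 *\<^sub>R (f (2 *\<^sub>R (x /\<^sub>R 2)) - 8 *\<^sub>R f (x /\<^sub>R 2)))
      \<le> \<psi> x" for x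
  proof -
    have "4 *\<^sub>R (x /\<^sub>R 2) = 2 *\<^sub>R x" "2 *\<^sub>R (x /\<^sub>R 2) = x" by simp_all
    then have "Dop f (x /\<^sub>R 2) (x /\<^sub>R 2)
        = 2 *\<^sub>R ((f (2 *\<^sub>R x) - 8 *\<^sub>R f x) - 2 *\<^sub>R (f (2 *\<^sub>R (x /\<^sub>R 2)) - 8 *\<^sub>R f (x /\<^sub>R 2)))"
      using Dop_diag[where f=f and x="x /\<^sub>R 2", OF odd] by simp
    then show ?thesis
      using bound[of "x /\<^sub>R 2" "x /\<^sub>R 2"] unfolding \<psi>_def by simp
  qed
  have terms: "2^i * \<psi> (x /\<^sub>R 2^i) = 1/2 * (2^i * \<phi> (x /\<^sub>R 2^Suc i) (x /\<^sub>R 2^Suc i))" for x i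
    by (simp add: \<psi>_def mult_ac)
  have summ': "summable (\<lambda>i. 2^i * \<phi> (x /\<^sub>R 2^Suc i) (x /\<^sub>R 2^Suc i))" for x
    using summ[of x] by (simp only: power_Suc mult.assoc summable_cmult_iff) simp
  have summ_\<psi>: "summable (\<lambda>i. 2^i * \<psi> (x /\<^sub>R 2^i))" for x
    unfolding terms by (intro summable_mult summ')
  have sum_eq: "(\<Sum>i. 2^i * \<psi> (x /\<^sub>R 2^i)) = 1/2 * (\<Sum>i. 2^i * \<phi> (x /\<^sub>R 2^Suc i) (x /\<^sub>R 2^Suc i))" for x
    unfolding terms by (rule suminf_mult[OF summ'])
  show thesis
    by (rule Dop_stability[where r=2, OF _ odd bound lim0 err summ_\<psi>])
      (simp, unfold sum_eq, rule that, assumption+, blast)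
qed

lemma Dop_stability_contracting:
  fixes f :: "'a::real_normed_vector \<Rightarrow> 'b::banach"
  assumes odd: "\<And>x. f (- x) = - f x"
    and bound: "\<And>x y. norm (Dop f x y) \<le> \<phi> x y"
    and summ: "\<And>x. summable (\<lambda>i. (1/2)^Suc i * \<phi> (x /\<^sub>R (1/2)^Suc i) (x /\<^sub>R (1/2)^Suc i))"
    and lim0: "\<And>x y. (\<lambda>n. (1/2)^n * \<phi> (x /\<^sub>R (1/2)^n) (y /\<^sub>R (1/2)^n)) \<longlonglongrightarrow> 0"
  obtains A where
      "\<And>x. (\<lambda>n. (1/2)^n *\<^sub>R (f (2 *\<^sub>R (x /\<^sub>R (1/2)^n)) - 8 *\<^sub>R f (x /\<^sub>R (1/2)^n))) \<longlonglongrightarrow> A x"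
    and "Modules.additive A"
    and "\<And>x y. Dop A x y = 0"
    and "\<And>x. norm (f (2 *\<^sub>R x) - 8 *\<^sub>R f x - A x)
               \<le> 1/2 * (\<Sum>i. (1/2)^Suc i * \<phi> (x /\<^sub>R (1/2)^i) (x /\<^sub>R (1/2)^i))"
    and "\<And>B. Modules.additive B \<Longrightarrow>
           (\<And>x. norm (f (2 *\<^sub>R x) - 8 *\<^sub>R f x - B x)
                   \<le> 1/2 * (\<Sum>i. (1/2)^Suc i * \<phi> (x /\<^sub>R (1/2)^i) (x /\<^sub>R (1/2)^i))) \<Longrightarrow> B = A"
proof -
  define \<psi> where "\<psi> x = 1/4 * \<phi> x x" for x
  have err: "norm ((f (2 *\<^sub>R x) - 8 *\<^sub>R f x)
      - (1/2) *\<^sub>R (f (2 *\<^sub>R (x /\<^sub>R (1/2))) - 8 *\<^sub>R f (x /\<^sub>R (1/2)))) \<le> \<psi> x" for x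
  proof -
    have "(f (2 *\<^sub>R x) - 8 *\<^sub>R f x) - (1/2) *\<^sub>R (f (2 *\<^sub>R (x /\<^sub>R (1/2))) - 8 *\<^sub>R f (x /\<^sub>R (1/2)))
        = - (1/4) *\<^sub>R Dop f x x"
      unfolding Dop_diag[where f=f, OF odd] by simp norm
    then show ?thesis
      using bound[of x x] unfolding \<psi>_def by simp
  qed
  have terms: "(1/2)^i * \<psi> (x /\<^sub>R (1/2)^i) = 1/2 * ((1/2)^Suc i * \<phi> (x /\<^sub>R (1/2)^i) (x /\<^sub>R (1/2)^i))"
    for x i
    by (simp add: \<psi>_def)
  have summ': "summable (\<lambda>i. (1/2)^Suc i * \<phi> (x /\<^sub>R (1/2)^i) (x /\<^sub>R (1/2)^i))" for x
  proof -
    have "summable (\<lambda>i. (1/2)^i * \<phi> (x /\<^sub>R (1/2)^i) (x /\<^sub>R (1/2)^i))"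
      using summ[of x] by (rule summable_Suc_iff[THEN iffD1])
    then show ?thesis by (simp only: power_Suc mult.assoc summable_cmult_iff) simp
  qed
  have summ_\<psi>: "summable (\<lambda>i. (1/2)^i * \<psi> (x /\<^sub>R (1/2)^i))" for x
    unfolding terms by (intro summable_mult summ')
  have sum_eq: "(\<Sum>i. (1/2)^i * \<psi> (x /\<^sub>R (1/2)^i))
      = 1/2 * (\<Sum>i. (1/2)^Suc i * \<phi> (x /\<^sub>R (1/2)^i) (x /\<^sub>R (1/2)^i))" for x
    unfolding terms by (rule suminf_mult[OF summ'])
  show thesis
    by (rule Dop_stability[where r="1/2", OF _ odd bound lim0 err summ_\<psi>])
      (simp, unfold sum_eq, rule that, assumption+, blast)
qed

lemma two_powi_exponents_pos:
  fixes x :: "'a::real_vector"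
  shows "(2::real) powi (1 * int n) = 2^n"
    and "x /\<^sub>R (2::real) powi (1 * (int n - 1)) = 2 *\<^sub>R (x /\<^sub>R 2^n)"
    and "(2::real) powi (int (Suc i) * 1) = 2^Suc i"
    and "(2::real) powi (int (i + nat (\<bar>1 - 1\<bar> div 2)) * 1) = 2^i"
    and "(2::real) powi (1 * (int (i + nat (\<bar>1 - 1\<bar> div 2)) + 1)) = 2^Suc i"
  by (simp_all add: power_int_diff power_int_add field_simps)

lemma two_powi_exponents_neg:
  fixes x :: "'a::real_vector"
  shows "(2::real) powi (-1 * int n) = (1/2)^n"
    and "x /\<^sub>R (2::real) powi (-1 * (int n - -1)) = 2 *\<^sub>R (x /\<^sub>R (1/2)^n)"
    and "(2::real) powi (int (Suc i) * -1) = (1/2)^Suc i"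
    and "(2::real) powi (int (i + nat (\<bar>-1 - 1\<bar> div 2)) * -1) = (1/2)^Suc i"
    and "(2::real) powi (-1 * (int (i + nat (\<bar>-1 - 1\<bar> div 2)) + -1)) = (1/2)^i"
  by (simp_all add: power_int_diff power_int_minus power_one_over field_simps)

theorem theorem3p1:
  fixes f :: "'a::real_normed_vector \<Rightarrow> 'b::banach"
    and \<phi> :: "'a \<Rightarrow> 'a \<Rightarrow> real"
    and l :: int
  assumes l: "l \<in> {-1, 1}"
    and odd: "\<And>x. f (- x) = - f x"
    and phi_nonneg: "\<And>x y. \<phi> x y \<ge> 0"
    and bound: "\<And>x y. norm (Dop f x y) \<le> \<phi> x y"
    and summ: "\<And>x. summable (\<lambda>i::nat. 2 powi (int (Suc i) * l) *
                  \<phi> (x /\<^sub>R 2 powi (int (Suc i) * l)) (x /\<^sub>R 2 powi (int (Suc i) * l)))"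
    and lim0: "\<And>x y. (\<lambda>n::nat. 2 powi (l * int n) *
                  \<phi> (x /\<^sub>R 2 powi (l * int n)) (y /\<^sub>R 2 powi (l * int n))) \<longlonglongrightarrow> 0"
  shows "\<exists>A :: 'a \<Rightarrow> 'b.
     (\<forall>x. (\<lambda>n::nat. 2 powi (l * int n) *\<^sub>R
              (f (x /\<^sub>R 2 powi (l * (int n - l))) - 8 *\<^sub>R f (x /\<^sub>R 2 powi (l * int n))))
            \<longlonglongrightarrow> A x)
   \<and> Modules.additive A
   \<and> (\<forall>x y. 3 *\<^sub>R A (x + 3 *\<^sub>R y) - A (3 *\<^sub>R x + y) =
              12 *\<^sub>R (A (x + y) + A (x - y)) - 16 *\<^sub>R (A x + A y)
              + 12 *\<^sub>R A (2 *\<^sub>R y) - 4 *\<^sub>R A (2 *\<^sub>R x))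
   \<and> (\<forall>x. norm (f (2 *\<^sub>R x) - 8 *\<^sub>R f x - A x) \<le>
          1/2 * (\<Sum>i. 2 powi (int (i + nat (\<bar>l - 1\<bar> div 2)) * l) *
             \<phi> (x /\<^sub>R 2 powi (l * (int (i + nat (\<bar>l - 1\<bar> div 2)) + l)))
               (x /\<^sub>R 2 powi (l * (int (i + nat (\<bar>l - 1\<bar> div 2)) + l)))))
   \<and> (\<forall>B :: 'a \<Rightarrow> 'b. Modules.additive B
        \<and> (\<forall>x y. 3 *\<^sub>R B (x + 3 *\<^sub>R y) - B (3 *\<^sub>R x + y) =
              12 *\<^sub>R (B (x + y) + B (x - y)) - 16 *\<^sub>R (B x + B y)
              + 12 *\<^sub>R B (2 *\<^sub>R y) - 4 *\<^sub>R B (2 *\<^sub>R x))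
        \<and> (\<forall>x. norm (f (2 *\<^sub>R x) - 8 *\<^sub>R f x - B x) \<le>
          1/2 * (\<Sum>i. 2 powi (int (i + nat (\<bar>l - 1\<bar> div 2)) * l) *
             \<phi> (x /\<^sub>R 2 powi (l * (int (i + nat (\<bar>l - 1\<bar> div 2)) + l)))
               (x /\<^sub>R 2 powi (l * (int (i + nat (\<bar>l - 1\<bar> div 2)) + l)))))
        \<longrightarrow> B = A)"
proof -
  (* \<open>phi_nonneg\<close> is implied by \<open>bound\<close> and not needed. *)
  consider "l = 1" | "l = -1" using l by blast
  then show ?thesis
  proof cases
    case 1
    have "summable (\<lambda>i. 2^Suc i * \<phi> (x /\<^sub>R 2^Suc i) (x /\<^sub>R 2^Suc i))"
      and "(\<lambda>n. 2^n * \<phi> (x /\<^sub>R 2^n) (y /\<^sub>R 2^n)) \<longlonglongrightarrow> 0" for x y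
      using summ[of x] lim0[of x y] unfolding 1 two_powi_exponents_pos by simp_all
    then show ?thesis
      unfolding 1 two_powi_exponents_pos Dop_eq_zero_iff[symmetric]
      by (rule Dop_stability_expanding[OF odd bound]) blast
  next
    case 2
    have "summable (\<lambda>i. (1/2)^Suc i * \<phi> (x /\<^sub>R (1/2)^Suc i) (x /\<^sub>R (1/2)^Suc i))"
      and "(\<lambda>n. (1/2)^n * \<phi> (x /\<^sub>R (1/2)^n) (y /\<^sub>R (1/2)^n)) \<longlonglongrightarrow> 0" for x y
      using summ[of x] lim0[of x y] unfolding 2 two_powi_exponents_neg by simp_all
    then show ?thesis
      unfolding 2 two_powi_exponents_neg Dop_eq_zero_iff[symmetric]
      by (rule Dop_stability_contracting[OF odd bound]) blast
  qed
qed

end
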